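(* For all integers $s\ge k\ge 3$ there is a constant $C=C(k,s)>0$ such that for every integer $n\ge 2$, $$ f_{s,s+1}^{(k)}(n)\le C(\log n)^{1/(k-2)}. $$ Equivalently, for every $n\ge 2$ there is a $K_{s+1}^{(k)}$-free $k$-uniform hypergraph on $n$ vertices in which every set of at least $C(\log n)^{1/(k-2)}$ vertices contains a copy of $K_s^{(k)}$.
   Context: For integers $k\le s<t$ and $n\ge 0$, $f_{s,t}^{(k)}(n)$ is defined as $$ f_{s,t}^{(k)}(n)=\min_{\mathcal{G}} \max\{ |W| : W\subseteq V(\mathcal{G}) \text{ and the induced subhypergraph } \mathcal{G}[W] \text{ contains no copy of } K_s^{(k)}\}, $$ where the minimum is over all $k$-uniform hypergraphs $\mathcal{G}$ on $n$ vertices containing no copy of $K_t^{(k)}$, and $K_r^{(k)}$ denotes the complete $k$-uniform hypergraph on $r$ vertices. All logarithms are natural logarithms. *)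

theory Defs
  imports "HOL-Analysis.Analysis"
begin

definition uniform_hypergraph :: "nat \<Rightarrow> nat \<Rightarrow> nat set set \<Rightarrow> bool" where
  "uniform_hypergraph k n E \<longleftrightarrow> (\<forall>e\<in>E. e \<subseteq> {..<n} \<and> card e = k)"

definition has_clique :: "nat \<Rightarrow> nat set set \<Rightarrow> nat \<Rightarrow> nat set \<Rightarrow> bool" where
  "has_clique k E r W \<longleftrightarrow>
     (\<exists>S. S \<subseteq> W \<and> finite S \<and> card S = r \<and> (\<forall>e. e \<subseteq> S \<and> card e = k \<longrightarrow> e \<in> E))"

definition free_number :: "nat \<Rightarrow> nat \<Rightarrow> nat \<Rightarrow> nat set set \<Rightarrow> nat" where
  "free_number k s n E = Max {card W | W. W \<subseteq> {..<n} \<and> \<not> has_clique k E s W}"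

definition f_ramsey :: "nat \<Rightarrow> nat \<Rightarrow> nat \<Rightarrow> nat \<Rightarrow> nat" where
  "f_ramsey k s t n = Min {free_number k s n E | E.
      uniform_hypergraph k n E \<and> \<not> has_clique k E t {..<n}}"

end

theory Submission
  imports Defs
begin

text \<open>Colour every \<open>(k-1)\<close>-subset of \<open>{..<n}\<close> with one of \<open>s - k + 2\<close> colours and let a
  \<open>k\<close>-set \<open>e\<close> be an edge iff \<open>e\<close> minus its largest element and \<open>e\<close> minus its second largest
  element receive different colours. Whatever the colouring, there is no \<open>K\<^sub>s\<^sub>+\<^sub>1\<close>: fixing the
  \<open>k - 2\<close> smallest vertices of an \<open>(s+1)\<close>-set, the other \<open>s - k + 3\<close> vertices would need
  pairwise distinct colours. On the other hand an \<open>s\<close>-set spans a clique as soon as its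
  \<open>(k-1)\<close>-subsets are coloured by the rank of their maximum. An \<open>m\<close>-set contains a packing of
  \<open>\<Omega>(m\<^sup>k\<^sup>-\<^sup>1)\<close> \<open>s\<close>-sets with disjoint \<open>(k-1)\<close>-shadows, so a uniformly random colouring leaves it
  without \<open>K\<^sub>s\<close> with probability \<open>exp(-\<Omega>(m\<^sup>k\<^sup>-\<^sup>1))\<close>, and a union bound over the \<open>n\<^sup>m\<close> sets
  succeeds once \<open>m\<^sup>k\<^sup>-\<^sup>2\<close> is a large multiple of \<open>log n\<close>.\<close>

definition shadow :: "nat \<Rightarrow> 'a set \<Rightarrow> 'a set set" where
  "shadow j F = {f. f \<subseteq> F \<and> card f = j}"

lemma card_shadow: "finite F \<Longrightarrow> card (shadow j F) = card F choose j"
  unfolding shadow_def by (rule n_subsets)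

lemma finite_shadow: "finite F \<Longrightarrow> finite (shadow j F)"
  unfolding shadow_def by (rule finite_subset[of _ "Pow F"]) auto

definition colour_hypergraph :: "nat \<Rightarrow> nat \<Rightarrow> (nat set \<Rightarrow> nat) \<Rightarrow> nat set set" where
  "colour_hypergraph k n c = {e. e \<subseteq> {..<n} \<and> card e = k \<and>
      c (e - {Max e}) \<noteq> c (e - {Max (e - {Max e})})}"

lemma uniform_colour_hypergraph: "uniform_hypergraph k n (colour_hypergraph k n c)"
  unfolding uniform_hypergraph_def colour_hypergraph_def by auto

lemma has_clique_mono: "has_clique k E s F \<Longrightarrow> F \<subseteq> W \<Longrightarrow> has_clique k E s W"
  unfolding has_clique_def by blast

lemma exists_initial_subset:
  fixes S :: "'a::linorder set"
  assumes "finite S" and "j \<le> card S"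
  shows "\<exists>P\<subseteq>S. card P = j \<and> (\<forall>x\<in>P. \<forall>y\<in>S - P. x < y)"
  using assms(2)
proof (induction j)
  case 0
  then show ?case by auto
next
  case (Suc j)
  then obtain P where P: "P \<subseteq> S" "card P = j" "\<forall>x\<in>P. \<forall>y\<in>S - P. x < y" by auto
  have "finite P" using P(1) assms(1) by (rule finite_subset)
  then have "card (S - P) > 0" using P Suc.prems by (simp add: card_Diff_subset)
  then have "S - P \<noteq> {}" using card_gt_0_iff by blast
  define z where "z = Min (S - P)"
  have z: "z \<in> S - P" unfolding z_def using \<open>S - P \<noteq> {}\<close> assms(1) by (intro Min_in) auto
  have z_min: "\<forall>y\<in>S - P. z \<le> y" unfolding z_def using assms(1) by simp
  show ?case
  proof (intro exI[of _ "insert z P"] conjI)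
    show "insert z P \<subseteq> S" "card (insert z P) = Suc j" using z P \<open>finite P\<close> by auto
    show "\<forall>x\<in>insert z P. \<forall>y\<in>S - insert z P. x < y"
      using z_min P(3) by (force simp: le_less)
  qed
qed

lemma colour_hypergraph_no_clique:
  assumes "2 \<le> k" and "k \<le> s"
    and colours: "\<And>f. f \<subseteq> {..<n} \<Longrightarrow> card f = k - 1 \<Longrightarrow> c f < s - k + 2"
  shows "\<not> has_clique k (colour_hypergraph k n c) (s + 1) {..<n}"
proof
  assume "has_clique k (colour_hypergraph k n c) (s + 1) {..<n}"
  then obtain S where S: "S \<subseteq> {..<n}" "finite S" "card S = s + 1"
    and edges: "\<And>e. e \<subseteq> S \<Longrightarrow> card e = k \<Longrightarrow> e \<in> colour_hypergraph k n c"
    unfolding has_clique_def by auto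
  have "k - 2 \<le> card S" using S(3) assms(2) by simp
  then obtain P where P: "P \<subseteq> S" "card P = k - 2" and P_below: "\<forall>x\<in>P. \<forall>y\<in>S - P. x < y"
    using exists_initial_subset[OF S(2)] by blast
  have "finite P" using P(1) S(2) by (rule finite_subset)
  define R where "R = S - P"
  have card_R: "card R = s - k + 3"
    unfolding R_def using P \<open>finite P\<close> S assms(1,2) by (simp add: card_Diff_subset)
  have distinct: "c (insert x P) \<noteq> c (insert y P)" if "x \<in> R" "y \<in> R" "x < y" for x y
  proof -
    define e where "e = insert y (insert x P)"
    have "x \<notin> P" "y \<notin> P" and below: "\<forall>z\<in>P. z < x" using that P_below by (auto simp: R_def)
    then have "card e = k" unfolding e_def using \<open>finite P\<close> P(2) that(3) assms(1) by auto
    moreover have "e \<subseteq> S" unfolding e_def using that P by (auto simp: R_def)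
    ultimately have "c (e - {Max e}) \<noteq> c (e - {Max (e - {Max e})})"
      using edges unfolding colour_hypergraph_def by simp
    moreover have "Max e = y"
      unfolding e_def using \<open>finite P\<close> that(3) below by (intro Max_eqI) auto
    moreover have "e - {y} = insert x P" "e - {x} = insert y P"
      unfolding e_def using \<open>x \<notin> P\<close> \<open>y \<notin> P\<close> that(3) by auto
    moreover have "Max (insert x P) = x"
      using \<open>finite P\<close> below by (intro Max_eqI) auto
    ultimately show ?thesis by simp
  qed
  have "inj_on (\<lambda>x. c (insert x P)) R"
  proof (rule inj_onI)
    fix x y assume "x \<in> R" "y \<in> R" "c (insert x P) = c (insert y P)"
    then show "x = y" using distinct[of x y] distinct[of y x] by (cases x y rule: linorder_cases) auto
  qed
  moreover have "(\<lambda>x. c (insert x P)) ` R \<subseteq> {..<s - k + 2}"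
  proof (rule image_subsetI)
    fix x assume "x \<in> R"
    then have "insert x P \<subseteq> {..<n}" "card (insert x P) = k - 1"
      using P S \<open>finite P\<close> assms(1) by (auto simp: R_def)
    then show "c (insert x P) \<in> {..<s - k + 2}" using colours by simp
  qed
  ultimately have "card R \<le> card {..<s - k + 2}" by (intro card_inj_on_le) auto
  then show False using card_R by simp
qed

text \<open>At least \<open>k - 2\<close> elements of \<open>F\<close> lie below the maximum of a \<open>(k-1)\<close>-subset of \<open>F\<close>,
  so the truncated subtraction never cuts off and the colours fit into \<open>{..<s - k + 2}\<close>.\<close>
definition rank_colouring :: "nat \<Rightarrow> nat set \<Rightarrow> nat set \<Rightarrow> nat" where
  "rank_colouring k F f = card {y\<in>F. y < Max f} - (k - 2)"

lemma rank_colouring_less: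
  assumes "2 \<le> k" "k \<le> s" "finite F" "card F = s" "f \<in> shadow (k - 1) F"
  shows "rank_colouring k F f < s - k + 2"
proof -
  have f: "f \<subseteq> F" "card f = k - 1" using assms(5) unfolding shadow_def by auto
  then have "f \<noteq> {}" "finite f" using assms(1,3) finite_subset by auto
  then have "Max f \<in> F" using f(1) Max_in by blast
  then have "{y\<in>F. y < Max f} \<subseteq> F - {Max f}" by auto
  then have "card {y\<in>F. y < Max f} \<le> s - 1"
    using card_mono[of "F - {Max f}"] \<open>Max f \<in> F\<close> assms(3,4) by fastforce
  then show ?thesis unfolding rank_colouring_def using assms(1,2) by linarith
qed

lemma has_clique_of_rank_colouring:
  assumes "2 \<le> k" and F: "F \<subseteq> {..<n}" "card F = s"
    and rank: "\<And>f. f \<in> shadow (k - 1) F \<Longrightarrow> c f = rank_colouring k F f"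
  shows "has_clique k (colour_hypergraph k n c) s F"
  unfolding has_clique_def
proof (intro exI[of _ F] conjI allI impI)
  have "finite F" using F(1) by (rule finite_subset) simp
  then show "F \<subseteq> F" "finite F" "card F = s" using F by auto
  fix e assume e: "e \<subseteq> F \<and> card e = k"
  then have "finite e" "e \<noteq> {}" using \<open>finite F\<close> assms(1) finite_subset by auto
  define a where "a = Max e"
  define b where "b = Max (e - {a})"
  have "a \<in> e" unfolding a_def using \<open>finite e\<close> \<open>e \<noteq> {}\<close> by simp
  then have card_a: "card (e - {a}) = k - 1" using \<open>finite e\<close> e by simp
  then have "e - {a} \<noteq> {}" using assms(1) by (intro notI) simp
  then have "b \<in> e - {a}" unfolding b_def using \<open>finite e\<close> by (intro Max_in) auto
  then have "b < a" unfolding a_def using \<open>finite e\<close> by (simp add: le_neq_implies_less)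
  have card_b: "card (e - {b}) = k - 1" using \<open>b \<in> e - {a}\<close> \<open>finite e\<close> e by simp
  have "Max (e - {b}) = a"
    using \<open>finite e\<close> \<open>a \<in> e\<close> \<open>b < a\<close> by (intro Max_eqI) (auto simp: a_def)
  have "e - {a} \<in> shadow (k - 1) F" "e - {b} \<in> shadow (k - 1) F"
    using e card_a card_b unfolding shadow_def by auto
  then have colours: "c (e - {a}) = card {y\<in>F. y < b} - (k - 2)"
    "c (e - {b}) = card {y\<in>F. y < a} - (k - 2)"
    using rank \<open>Max (e - {b}) = a\<close> unfolding rank_colouring_def b_def by simp_all
  have "\<forall>z\<in>e - {a}. z \<le> b" unfolding b_def using \<open>finite e\<close> by simp
  then have "e - {a} - {b} \<subseteq> {y\<in>F. y < b}" using e by (auto simp: less_le)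
  then have "card (e - {a} - {b}) \<le> card {y\<in>F. y < b}" using \<open>finite F\<close> by (intro card_mono) auto
  moreover have "card (e - {a} - {b}) = k - 2" using card_a \<open>b \<in> e - {a}\<close> by simp
  ultimately have "k - 2 \<le> card {y\<in>F. y < b}" by simp
  moreover have "{y\<in>F. y < b} \<subset> {y\<in>F. y < a}" using \<open>b < a\<close> \<open>b \<in> e - {a}\<close> e by auto
  then have "card {y\<in>F. y < b} < card {y\<in>F. y < a}" using \<open>finite F\<close> by (intro psubset_card_mono) auto
  ultimately have "c (e - {a}) \<noteq> c (e - {b})" using colours by simp
  then show "e \<in> colour_hypergraph k n c"
    unfolding colour_hypergraph_def a_def b_def using e F(1) by auto
qed

lemma exists_maximal_shadow_packing:
  assumes "finite W" and "j \<le> s"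
  obtains FF where "FF \<subseteq> {F. F \<subseteq> W \<and> card F = s}" and "disjoint_family_on (shadow j) FF"
    and "\<And>G. G \<subseteq> W \<Longrightarrow> card G = s \<Longrightarrow> \<exists>F\<in>FF. shadow j F \<inter> shadow j G \<noteq> {}"
proof -
  define Q where "Q = {FF. FF \<subseteq> {F. F \<subseteq> W \<and> card F = s} \<and> disjoint_family_on (shadow j) FF}"
  have "Q \<subseteq> Pow (Pow W)" unfolding Q_def by auto
  then have "finite Q" using assms(1) finite_subset by blast
  moreover have "{} \<in> Q" unfolding Q_def disjoint_family_on_def by simp
  ultimately obtain FF where "FF \<in> Q" and FF_max: "\<And>GG. GG \<in> Q \<Longrightarrow> FF \<subseteq> GG \<Longrightarrow> FF = GG"
    using finite_has_maximal[of Q] by blast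
  have "\<exists>F\<in>FF. shadow j F \<inter> shadow j G \<noteq> {}" if G: "G \<subseteq> W" "card G = s" for G
  proof (rule ccontr)
    assume uncovered: "\<not> ?thesis"
    obtain f where "f \<subseteq> G" "card f = j"
      using obtain_subset_with_card_n[of j G] G assms(2) by auto
    then have "shadow j G \<noteq> {}" unfolding shadow_def by auto
    then have "G \<notin> FF" using uncovered by auto
    then have "insert G FF \<in> Q"
      using \<open>FF \<in> Q\<close> G uncovered unfolding Q_def by (auto simp: disjoint_family_on_insert)
    then show False using FF_max \<open>G \<notin> FF\<close> by blast
  qed
  then show ?thesis using that \<open>FF \<in> Q\<close> unfolding Q_def by blast
qed

text \<open>Every \<open>s\<close>-subset of \<open>W\<close> is \<open>f \<union> X\<close> with \<open>f\<close> a \<open>j\<close>-subset of some member of \<open>FF\<close>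
  and \<open>X\<close> an \<open>(s - j)\<close>-subset of \<open>W\<close>.\<close>
lemma binomial_le_of_shadow_cover:
  assumes "finite W" and FF: "FF \<subseteq> {F. F \<subseteq> W \<and> card F = s}"
    and cover: "\<And>G. G \<subseteq> W \<Longrightarrow> card G = s \<Longrightarrow> \<exists>F\<in>FF. shadow j F \<inter> shadow j G \<noteq> {}"
  shows "card W choose s \<le> card FF * (s choose j) * (card W choose (s - j))"
proof -
  have "finite FF" using FF assms(1) finite_subset[of FF "Pow W"] by auto
  have finite_F: "finite F" if "F \<in> FF" for F using that FF assms(1) finite_subset by blast
  define A where "A = (\<Union>F\<in>FF. shadow j F)"
  define Y where "Y = shadow (s - j) W"
  have "finite A" unfolding A_def using \<open>finite FF\<close> finite_F by (simp add: finite_shadow)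
  have "finite Y" unfolding Y_def using assms(1) by (rule finite_shadow)
  have "shadow s W \<subseteq> (\<lambda>(f, X). f \<union> X) ` (A \<times> Y)"
  proof
    fix G assume "G \<in> shadow s W"
    then have G: "G \<subseteq> W" "card G = s" unfolding shadow_def by auto
    obtain F f where "F \<in> FF" "f \<in> shadow j F" "f \<subseteq> G" "card f = j"
      using cover[OF G] unfolding shadow_def by auto
    moreover have "f \<subseteq> W" using \<open>f \<subseteq> G\<close> G(1) by blast
    then have "finite f" using assms(1) by (rule finite_subset)
    then have "G - f \<in> Y" using G \<open>f \<subseteq> G\<close> \<open>card f = j\<close> by (auto simp: Y_def shadow_def card_Diff_subset)
    ultimately have "(f, G - f) \<in> A \<times> Y" unfolding A_def by blast
    moreover have "G = (\<lambda>(f, X). f \<union> X) (f, G - f)" using \<open>f \<subseteq> G\<close> by auto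
    ultimately show "G \<in> (\<lambda>(f, X). f \<union> X) ` (A \<times> Y)" by (intro image_eqI)
  qed
  then have "card (shadow s W) \<le> card ((\<lambda>(f, X). f \<union> X) ` (A \<times> Y))"
    using \<open>finite A\<close> \<open>finite Y\<close> by (intro card_mono) auto
  also have "\<dots> \<le> card (A \<times> Y)" by (rule card_image_le) (simp add: \<open>finite A\<close> \<open>finite Y\<close>)
  also have "\<dots> = card A * card Y" by (rule card_cartesian_product)
  also have "\<dots> \<le> (\<Sum>F\<in>FF. card (shadow j F)) * card Y"
    unfolding A_def using card_UN_le[OF \<open>finite FF\<close>] by (rule mult_right_mono) simp
  also have "(\<Sum>F\<in>FF. card (shadow j F)) = card FF * (s choose j)"
  proof -
    have "card (shadow j F) = s choose j" if "F \<in> FF" for F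
      using that FF finite_F[OF that] by (auto simp: card_shadow)
    then show ?thesis by simp
  qed
  finally show ?thesis using assms(1) by (simp add: card_shadow Y_def)
qed

lemma card_eq_card_PiE_mult_card_fibre:
  fixes t :: "'a \<Rightarrow> 'b"
  assumes "A \<subseteq> D" and t: "t \<in> PiE A (\<lambda>_. R)" and S: "S \<subseteq> PiE D (\<lambda>_. R)"
    and ignores_A: "\<And>x y. x \<in> PiE D (\<lambda>_. R) \<Longrightarrow> y \<in> PiE D (\<lambda>_. R) \<Longrightarrow>
      (\<forall>f\<in>D - A. x f = y f) \<Longrightarrow> x \<in> S \<longleftrightarrow> y \<in> S"
  shows "card S = card (PiE A (\<lambda>_. R)) * card {x\<in>S. \<forall>f\<in>A. x f = t f}"
proof -
  define G where "G = {x\<in>S. \<forall>f\<in>A. x f = t f}"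
  define glue :: "('a \<Rightarrow> 'b) \<Rightarrow> ('a \<Rightarrow> 'b) \<Rightarrow> 'a \<Rightarrow> 'b" where "glue = (\<lambda>h x f. if f \<in> A then h f else x f)"
  have glue_in_S: "glue h x \<in> S" if "h \<in> PiE A (\<lambda>_. R)" "x \<in> S" for h x
  proof -
    have "x \<in> PiE D (\<lambda>_. R)" using S that(2) by auto
    moreover have "glue h x \<in> PiE D (\<lambda>_. R)"
      using calculation that(1) \<open>A \<subseteq> D\<close> by (auto simp: glue_def PiE_iff extensional_def)
    moreover have "\<forall>f\<in>D - A. x f = glue h x f" by (simp add: glue_def)
    ultimately show ?thesis using ignores_A that(2) by blast
  qed
  have "bij_betw (\<lambda>x. (restrict x A, glue t x)) S (PiE A (\<lambda>_. R) \<times> G)"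
  proof (rule bij_betw_byWitness[where f' = "\<lambda>(h, x). glue h x"])
    show "\<forall>x\<in>S. (\<lambda>(h, x). glue h x) (restrict x A, glue t x) = x"
      by (auto simp: glue_def fun_eq_iff)
    show "\<forall>y\<in>PiE A (\<lambda>_. R) \<times> G. (\<lambda>x. (restrict x A, glue t x)) ((\<lambda>(h, x). glue h x) y) = y"
      by (auto simp: glue_def G_def fun_eq_iff PiE_iff extensional_def)
    show "(\<lambda>x. (restrict x A, glue t x)) ` S \<subseteq> PiE A (\<lambda>_. R) \<times> G"
      using glue_in_S t S \<open>A \<subseteq> D\<close> by (fastforce simp: G_def glue_def PiE_iff)
    show "(\<lambda>(h, x). glue h x) ` (PiE A (\<lambda>_. R) \<times> G) \<subseteq> S"
      using glue_in_S by (auto simp: G_def)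
  qed
  then show ?thesis unfolding G_def by (simp add: bij_betw_same_card card_cartesian_product)
qed

lemma card_PiE_avoiding_disjoint_patterns:
  assumes "finite D" and "card R > 0" and "finite I"
    and blocks: "\<And>i. i \<in> I \<Longrightarrow> A i \<subseteq> D \<and> card (A i) = b \<and> t i \<in> PiE (A i) (\<lambda>_. R)"
    and "disjoint_family_on A I"
  shows "real (card {x \<in> PiE D (\<lambda>_. R). \<forall>i\<in>I. \<exists>f\<in>A i. x f \<noteq> t i f})
     = real (card R) ^ card D * (1 - 1 / real (card R) ^ b) ^ card I"
  using assms(3-5)
proof (induction I rule: finite_induct)
  case empty
  then show ?case using assms(1) by (simp add: card_PiE)
next
  case (insert j I)
  define S where "S = {x \<in> PiE D (\<lambda>_. R). \<forall>i\<in>I. \<exists>f\<in>A i. x f \<noteq> t i f}"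
  define G where "G = {x\<in>S. \<forall>f\<in>A j. x f = t j f}"
  have A_j: "A j \<subseteq> D" "card (A j) = b" "t j \<in> PiE (A j) (\<lambda>_. R)" using insert.prems(1) by auto
  have disjoint_j: "A i \<inter> A j = {}" if "i \<in> I" for i
    using that insert.hyps(2) by (intro disjoint_family_onD[OF insert.prems(2)]) auto
  have IH: "real (card S) = real (card R) ^ card D * (1 - 1 / real (card R) ^ b) ^ card I"
    unfolding S_def using insert by (simp add: disjoint_family_on_insert)
  have "card S = card (PiE (A j) (\<lambda>_. R)) * card G"
    unfolding G_def
  proof (rule card_eq_card_PiE_mult_card_fibre[OF A_j(1) A_j(3)])
    fix x y assume xy: "x \<in> PiE D (\<lambda>_. R)" "y \<in> PiE D (\<lambda>_. R)" and "\<forall>f\<in>D - A j. x f = y f"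
    moreover have "A i \<subseteq> D - A j" if "i \<in> I" for i using that disjoint_j insert.prems(1) by blast
    ultimately have "\<forall>i\<in>I. \<forall>f\<in>A i. x f = y f" by blast
    then show "x \<in> S \<longleftrightarrow> y \<in> S" using xy unfolding S_def by force
  qed (auto simp: S_def)
  moreover have "card (PiE (A j) (\<lambda>_. R)) = card R ^ b"
    using A_j finite_subset[OF A_j(1) assms(1)] by (simp add: card_PiE)
  ultimately have card_G: "real (card G) = real (card S) / real (card R) ^ b"
    using assms(2) by (simp add: field_simps)
  have "finite S" "G \<subseteq> S"
    using assms(1) card_ge_0_finite[OF assms(2)] by (auto simp: S_def G_def finite_PiE)
  then have "real (card (S - G)) = real (card S) - real (card G)"
    by (simp add: card_Diff_subset finite_subset card_mono of_nat_diff)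
  also have "\<dots> = real (card S) * (1 - 1 / real (card R) ^ b)"
    unfolding card_G using assms(2) by (simp add: field_simps)
  moreover have "{x \<in> PiE D (\<lambda>_. R). \<forall>i\<in>insert j I. \<exists>f\<in>A i. x f \<noteq> t i f} = S - G"
    unfolding S_def G_def by auto
  ultimately show ?case using IH insert.hyps by simp
qed

lemma real_pow_le_of_binomial_le:
  assumes "0 < s" "s \<le> m" "j \<le> s" and "m choose s \<le> N * (m choose (s - j))"
  shows "real m ^ j \<le> real s ^ s * real N"
proof -
  have "real m ^ j * real m ^ (s - j) / real s ^ s = (real m / real s) ^ s"
    using assms(3) by (simp add: power_divide power_add[symmetric])
  also have "\<dots> \<le> real (m choose s)" by (rule binomial_ge_n_over_k_pow_k[OF assms(2)])
  also have "\<dots> \<le> real N * real (m choose (s - j))" using assms(4) of_nat_mono by fastforce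
  also have "\<dots> \<le> real N * real m ^ (s - j)"
    using binomial_le_pow[of "s - j" m] assms(2) of_nat_mono by (fastforce intro: mult_left_mono)
  finally have "real m ^ (s - j) * real m ^ j \<le> real m ^ (s - j) * (real s ^ s * real N)"
    using assms(1) by (simp add: divide_le_eq algebra_simps)
  then show ?thesis using assms(1,2) by simp
qed

lemma real_pow_le_card_of_shadow_cover:
  assumes "0 < j" "j \<le> s" "s \<le> card W" "finite W" and FF: "FF \<subseteq> {F. F \<subseteq> W \<and> card F = s}"
    and cover: "\<And>G. G \<subseteq> W \<Longrightarrow> card G = s \<Longrightarrow> \<exists>F\<in>FF. shadow j F \<inter> shadow j G \<noteq> {}"
  shows "real (card W) ^ j \<le> real s ^ s * real (s choose j) * real (card FF)"
proof -
  have "card W choose s \<le> ((s choose j) * card FF) * (card W choose (s - j))"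
    using binomial_le_of_shadow_cover[OF assms(4) FF cover] by (simp add: mult_ac)
  then have "real (card W) ^ j \<le> real s ^ s * real ((s choose j) * card FF)"
    using assms(1,2) by (intro real_pow_le_of_binomial_le[OF _ assms(3,2)]) simp
  then show ?thesis by (simp add: mult_ac)
qed

text \<open>The three factors: \<open>s\<^sup>s\<close> from \<open>(m / s)\<^sup>s \<le> m choose s\<close> in the packing count, the size of
  the \<open>(k-1)\<close>-shadow of an \<open>s\<close>-set, and the number of colourings of that shadow.\<close>
definition decay_const :: "nat \<Rightarrow> nat \<Rightarrow> real" where
  "decay_const k s = real s ^ s * real (s choose (k - 1)) * real (s - k + 2) ^ (s choose (k - 1))"

lemma decay_const_pos:
  assumes "k \<le> s"
  shows "0 < decay_const k s"
proof -
  have "0 < real s ^ s" by (cases "s = 0") auto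
  moreover have "0 < real (s choose (k - 1))" using assms by simp
  moreover have "0 < real (s - k + 2) ^ (s choose (k - 1))" by simp
  ultimately show ?thesis unfolding decay_const_def by (intro mult_pos_pos)
qed

lemma clique_free_colouring_avoids_rank_pattern:
  assumes "2 \<le> k" "F \<subseteq> W" "card F = s" "W \<subseteq> {..<n}"
    and "\<not> has_clique k (colour_hypergraph k n c) s W"
  shows "\<exists>f\<in>shadow (k - 1) F. c f \<noteq> rank_colouring k F f"
proof (rule ccontr)
  assume "\<not> ?thesis"
  then have "has_clique k (colour_hypergraph k n c) s F"
    using assms(2,4) by (intro has_clique_of_rank_colouring[OF assms(1) _ assms(3)]) auto
  then show False using assms(2,5) has_clique_mono by blast
qed

lemma card_clique_free_colourings_le:
  assumes "2 \<le> k" "k \<le> s" "s \<le> card W" "W \<subseteq> {..<n}"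
  shows "real (card {c \<in> PiE (shadow (k - 1) {..<n}) (\<lambda>_. {..<s - k + 2}).
            \<not> has_clique k (colour_hypergraph k n c) s W})
       \<le> real (s - k + 2) ^ card (shadow (k - 1) {..<n}) * exp (- (real (card W) ^ (k - 1) / decay_const k s))"
proof -
  define D where "D = shadow (k - 1) {..<n}"
  define r where "r = s - k + 2"
  define b where "b = s choose (k - 1)"
  have "finite W" using assms(4) by (rule finite_subset) simp
  have "k - 1 \<le> s" using assms(2) by simp
  obtain FF where FF: "FF \<subseteq> {F. F \<subseteq> W \<and> card F = s}"
    and disjoint: "disjoint_family_on (shadow (k - 1)) FF"
    and cover: "\<And>G. G \<subseteq> W \<Longrightarrow> card G = s \<Longrightarrow> \<exists>F\<in>FF. shadow (k - 1) F \<inter> shadow (k - 1) G \<noteq> {}"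
    using \<open>finite W\<close> \<open>k - 1 \<le> s\<close> by (rule exists_maximal_shadow_packing) (rule that)
  have "finite FF" using FF \<open>finite W\<close> finite_subset[of FF "Pow W"] by auto
  have "finite D" unfolding D_def by (simp add: finite_shadow)
  define t where "t = (\<lambda>F. restrict (rank_colouring k F) (shadow (k - 1) F))"
  have blocks: "shadow (k - 1) F \<subseteq> D \<and> card (shadow (k - 1) F) = b
      \<and> t F \<in> PiE (shadow (k - 1) F) (\<lambda>_. {..<r})" if "F \<in> FF" for F
  proof -
    have F: "F \<subseteq> W" "card F = s" using that FF by auto
    have "finite F" using F(1) \<open>finite W\<close> by (rule finite_subset)
    have "shadow (k - 1) F \<subseteq> D" unfolding D_def shadow_def using F(1) assms(4) by auto
    moreover have "card (shadow (k - 1) F) = b" unfolding b_def using \<open>finite F\<close> F(2) by (simp add: card_shadow)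
    moreover have "t F \<in> PiE (shadow (k - 1) F) (\<lambda>_. {..<r})"
      unfolding t_def r_def using rank_colouring_less[OF assms(1,2) \<open>finite F\<close> F(2)] by auto
    ultimately show ?thesis by blast
  qed
  have "{c \<in> PiE D (\<lambda>_. {..<r}). \<not> has_clique k (colour_hypergraph k n c) s W}
      \<subseteq> {c \<in> PiE D (\<lambda>_. {..<r}). \<forall>F\<in>FF. \<exists>f\<in>shadow (k - 1) F. c f \<noteq> t F f}"
  proof (rule subsetI)
    fix c assume "c \<in> {c \<in> PiE D (\<lambda>_. {..<r}). \<not> has_clique k (colour_hypergraph k n c) s W}"
    then have c: "c \<in> PiE D (\<lambda>_. {..<r})" "\<not> has_clique k (colour_hypergraph k n c) s W" by auto
    have "\<exists>f\<in>shadow (k - 1) F. c f \<noteq> t F f" if "F \<in> FF" for F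
      using clique_free_colouring_avoids_rank_pattern[OF assms(1) _ _ assms(4) c(2)] that FF
      by (auto simp: t_def)
    then show "c \<in> {c \<in> PiE D (\<lambda>_. {..<r}). \<forall>F\<in>FF. \<exists>f\<in>shadow (k - 1) F. c f \<noteq> t F f}"
      using c(1) by blast
  qed
  then have "real (card {c \<in> PiE D (\<lambda>_. {..<r}). \<not> has_clique k (colour_hypergraph k n c) s W})
      \<le> real (card {c \<in> PiE D (\<lambda>_. {..<r}). \<forall>F\<in>FF. \<exists>f\<in>shadow (k - 1) F. c f \<noteq> t F f})"
    using \<open>finite D\<close> by (simp add: card_mono finite_PiE)
  also have "\<dots> = real r ^ card D * (1 - 1 / real r ^ b) ^ card FF"
    using card_PiE_avoiding_disjoint_patterns[OF \<open>finite D\<close> _ \<open>finite FF\<close> blocks disjoint] assms(2)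
    by (simp add: r_def)
  also have "\<dots> \<le> real r ^ card D * exp (- (1 / real r ^ b)) ^ card FF"
    using exp_ge_add_one_self[of "- (1 / real r ^ b)"] assms(2)
    by (intro mult_left_mono power_mono) (auto simp: r_def)
  also have "\<dots> = real r ^ card D * exp (- (real (card FF) / real r ^ b))"
    by (simp add: exp_of_nat_mult[symmetric])
  also have "\<dots> \<le> real r ^ card D * exp (- (real (card W) ^ (k - 1) / decay_const k s))"
  proof -
    have "real (card W) ^ (k - 1) \<le> real s ^ s * real b * real (card FF)"
      unfolding b_def using assms(1,2)
      by (intro real_pow_le_card_of_shadow_cover[OF _ _ assms(3) \<open>finite W\<close> FF cover]) simp_all
    moreover have "0 < real s ^ s * real b" using assms(1,2) by (simp add: b_def)
    ultimately have "real (card W) ^ (k - 1) / (real s ^ s * real b) \<le> real (card FF)"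
      by (simp add: divide_le_eq mult_ac)
    then have "real (card W) ^ (k - 1) / (real s ^ s * real b) / real r ^ b \<le> real (card FF) / real r ^ b"
      by (rule divide_right_mono) simp
    then show ?thesis by (simp add: decay_const_def b_def r_def divide_divide_eq_left)
  qed
  finally show ?thesis unfolding D_def r_def .
qed

lemma card_shadow_lessThan_le_pow: "card (shadow m {..<n}) \<le> n ^ m"
  by (cases "m \<le> n") (simp_all add: card_shadow binomial_le_pow binomial_eq_0)

lemma exists_colouring_with_cliques_everywhere:
  assumes "2 \<le> k" "k \<le> s" "s \<le> m"
    and union_bound: "real n ^ m * exp (- (real m ^ (k - 1) / decay_const k s)) < 1"
  obtains c where "c \<in> PiE (shadow (k - 1) {..<n}) (\<lambda>_. {..<s - k + 2})"
    and "\<And>W. W \<subseteq> {..<n} \<Longrightarrow> card W = m \<Longrightarrow> has_clique k (colour_hypergraph k n c) s W"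
proof -
  define D where "D = shadow (k - 1) {..<n}"
  define r where "r = s - k + 2"
  define e where "e = exp (- (real m ^ (k - 1) / decay_const k s))"
  define Col where "Col = PiE D (\<lambda>_. {..<r})"
  define bad where "bad = (\<lambda>W. {c\<in>Col. \<not> has_clique k (colour_hypergraph k n c) s W})"
  define Bad where "Bad = (\<Union>W\<in>shadow m {..<n}. bad W)"
  have "finite Col" unfolding Col_def D_def by (simp add: finite_shadow finite_PiE)
  have card_Col: "card Col = r ^ card D" unfolding Col_def D_def by (simp add: finite_shadow card_PiE)
  have "card Bad \<le> (\<Sum>W\<in>shadow m {..<n}. card (bad W))"
    unfolding Bad_def by (rule card_UN_le) (simp add: finite_shadow)
  then have "real (card Bad) \<le> (\<Sum>W\<in>shadow m {..<n}. real (card (bad W)))"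
    by (metis of_nat_le_iff of_nat_sum)
  also have "\<dots> \<le> (\<Sum>W\<in>shadow m {..<n}. real r ^ card D * e)"
  proof (rule sum_mono)
    fix W assume "W \<in> shadow m {..<n}"
    then have "W \<subseteq> {..<n}" "card W = m" by (auto simp: shadow_def)
    then show "real (card (bad W)) \<le> real r ^ card D * e"
      using card_clique_free_colourings_le[OF assms(1,2), of W n] assms(3)
      unfolding bad_def Col_def D_def r_def e_def by simp
  qed
  also have "\<dots> = real (card (shadow m {..<n})) * (real r ^ card D * e)" by simp
  also have "\<dots> \<le> real n ^ m * (real r ^ card D * e)"
    using card_shadow_lessThan_le_pow[of m n] by (intro mult_right_mono) (simp_all add: e_def flip: of_nat_power)
  also have "\<dots> = (real n ^ m * e) * real r ^ card D" by (simp add: mult_ac)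
  also have "\<dots> < 1 * real r ^ card D"
    using union_bound assms(2) unfolding e_def r_def by (intro mult_strict_right_mono) simp_all
  also have "\<dots> = real (card Col)" by (simp add: card_Col)
  finally have "card Bad < card Col" by linarith
  moreover have "Bad \<subseteq> Col" unfolding Bad_def bad_def by blast
  ultimately have "\<not> Col \<subseteq> Bad" by auto
  then obtain c where "c \<in> Col" "c \<notin> Bad" by blast
  show ?thesis
  proof (rule that)
    show "c \<in> PiE (shadow (k - 1) {..<n}) (\<lambda>_. {..<s - k + 2})"
      using \<open>c \<in> Col\<close> unfolding Col_def D_def r_def .
    fix W assume "W \<subseteq> {..<n}" "card W = m"
    then have "W \<in> shadow m {..<n}" by (simp add: shadow_def)
    then show "has_clique k (colour_hypergraph k n c) s W"
      using \<open>c \<in> Col\<close> \<open>c \<notin> Bad\<close> unfolding Bad_def bad_def by blast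
  qed
qed

lemma free_number_less:
  assumes "0 < s" and cliques: "\<And>W. W \<subseteq> {..<n} \<Longrightarrow> card W = m \<Longrightarrow> has_clique k E s W"
  shows "free_number k s n E < m"
proof -
  let ?sizes = "{card W |W. W \<subseteq> {..<n} \<and> \<not> has_clique k E s W}"
  have "?sizes \<subseteq> {..n}" using card_mono[of "{..<n}"] by fastforce
  then have "finite ?sizes" using finite_subset by blast
  moreover have "\<not> has_clique k E s {}" using assms(1) unfolding has_clique_def by auto
  then have "?sizes \<noteq> {}" by blast
  moreover have "card W < m" if "W \<subseteq> {..<n}" "\<not> has_clique k E s W" for W
  proof (rule ccontr)
    assume "\<not> card W < m"
    then have "m \<le> card W" by simp
    then obtain W' where "W' \<subseteq> W" "card W' = m" by (rule obtain_subset_with_card_n)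
    then show False using cliques that has_clique_mono by blast
  qed
  ultimately show ?thesis unfolding free_number_def by (auto simp: Max_less_iff)
qed

lemma f_ramsey_le_free_number:
  assumes "uniform_hypergraph k n E" and "\<not> has_clique k E t {..<n}"
  shows "f_ramsey k s t n \<le> free_number k s n E"
  unfolding f_ramsey_def
proof (rule Min_le)
  show "finite {free_number k s n E |E. uniform_hypergraph k n E \<and> \<not> has_clique k E t {..<n}}"
    by (rule finite_subset[of _ "free_number k s n ` Pow (Pow {..<n})"])
      (auto simp: uniform_hypergraph_def)
qed (use assms in blast)

lemma f_ramsey_less_of_union_bound:
  assumes "2 \<le> k" "k \<le> s" "s \<le> m"
    and "real n ^ m * exp (- (real m ^ (k - 1) / decay_const k s)) < 1"
  shows "f_ramsey k s (s + 1) n < m"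
proof -
  obtain c where c: "c \<in> PiE (shadow (k - 1) {..<n}) (\<lambda>_. {..<s - k + 2})"
    and cliques: "\<And>W. W \<subseteq> {..<n} \<Longrightarrow> card W = m \<Longrightarrow> has_clique k (colour_hypergraph k n c) s W"
    using exists_colouring_with_cliques_everywhere[OF assms] by blast
  have "\<And>f. f \<subseteq> {..<n} \<Longrightarrow> card f = k - 1 \<Longrightarrow> c f < s - k + 2"
    using c by (auto simp: shadow_def PiE_iff)
  then have "\<not> has_clique k (colour_hypergraph k n c) (s + 1) {..<n}"
    by (rule colour_hypergraph_no_clique[OF assms(1,2)])
  then have "f_ramsey k s (s + 1) n \<le> free_number k s n (colour_hypergraph k n c)"
    by (rule f_ramsey_le_free_number[OF uniform_colour_hypergraph])
  also have "\<dots> < m" by (rule free_number_less[OF _ cliques]) (use assms(1,2) in simp)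
  finally show ?thesis .
qed

lemma pow_mult_exp_less_one:
  fixes K :: real and n m j :: nat
  assumes "0 < K" "0 < n" "0 < m" "K * ln (real n) < real m ^ j"
  shows "real n ^ m * exp (- (real m ^ Suc j / K)) < 1"
proof -
  have "real n ^ m = exp (real m * ln (real n))" using assms(2) by (simp add: exp_of_nat_mult)
  moreover have "real m * ln (real n) < real m ^ Suc j / K"
    using mult_strict_left_mono[OF assms(4), of "real m"] assms(1,3) by (simp add: field_simps)
  ultimately show ?thesis by (simp flip: exp_add)
qed

lemma exists_nat_root_ln_bound:
  fixes K :: real and j s :: nat
  assumes "0 < K" "1 \<le> j"
  shows "\<exists>C>0. \<forall>n::nat. 2 \<le> n \<longrightarrow> (\<exists>m::nat. s < m \<and> K * ln (real n) < real m ^ j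
           \<and> real m \<le> C * ln (real n) powr (1 / real j))"
proof -
  define p where "p = 1 / real j"
  define C where "C = K powr p + (real s + 2) / ln 2 powr p"
  have "0 < C" unfolding C_def using assms(1) by (simp add: add_pos_nonneg)
  moreover have "\<exists>m::nat. s < m \<and> K * ln (real n) < real m ^ j \<and> real m \<le> C * ln (real n) powr p"
    if "2 \<le> n" for n :: nat
  proof -
    define l where "l = ln (real n)"
    have "ln 2 \<le> l" unfolding l_def using \<open>2 \<le> n\<close> by simp
    then have "0 < l" using ln_gt_zero[of 2] by linarith
    define m where "m = nat \<lceil>(K * l) powr p\<rceil> + s + 1"
    have "real (nat \<lceil>(K * l) powr p\<rceil>) = of_int \<lceil>(K * l) powr p\<rceil>" by simp
    then have m_lower: "(K * l) powr p < real m" and m_upper: "real m \<le> (K * l) powr p + (real s + 2)"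
      unfolding m_def using of_int_ceiling_le_add_one[of "(K * l) powr p"] le_of_int_ceiling[of "(K * l) powr p"]
      by linarith+
    have "K * l = ((K * l) powr p) ^ j"
      using assms \<open>0 < l\<close> by (simp add: p_def powr_realpow[symmetric] powr_powr)
    also have "\<dots> < real m ^ j" using m_lower assms(2) by (intro power_strict_mono) auto
    finally have "K * l < real m ^ j" .
    have "(real s + 2) * ln 2 powr p \<le> (real s + 2) * l powr p"
      using powr_mono2[OF _ _ \<open>ln 2 \<le> l\<close>, of p] by (intro mult_left_mono) (auto simp: p_def)
    moreover have "0 < ln 2 powr p" by simp
    ultimately have "real s + 2 \<le> (real s + 2) / ln 2 powr p * l powr p" by (simp add: field_simps)
    then have "real m \<le> C * l powr p"
      using m_upper assms(1) \<open>0 < l\<close> by (simp add: C_def powr_mult distrib_right)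
    moreover have "s < m" unfolding m_def by simp
    ultimately show ?thesis using \<open>K * l < real m ^ j\<close> unfolding l_def by blast
  qed
  ultimately show ?thesis unfolding p_def by blast
qed

theorem mainTheorem4:
  fixes k s :: nat
  assumes "3 \<le> k" and "k \<le> s"
  shows "\<exists>C::real. C > 0 \<and> (\<forall>n::nat. n \<ge> 2 \<longrightarrow>
           real (f_ramsey k s (s + 1) n) \<le> C * (ln (real n)) powr (1 / (real k - 2)))"
proof -
  have "1 \<le> k - 2" using assms(1) by simp
  from exists_nat_root_ln_bound[OF decay_const_pos[OF assms(2)] this, of s]
  obtain C where "0 < C" and C: "\<And>n. 2 \<le> n \<Longrightarrow> \<exists>m::nat. s < m
      \<and> decay_const k s * ln (real n) < real m ^ (k - 2) \<and> real m \<le> C * ln (real n) powr (1 / real (k - 2))"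
    by blast
  have "real (f_ramsey k s (s + 1) n) \<le> C * ln (real n) powr (1 / (real k - 2))" if "2 \<le> n" for n
  proof -
    obtain m where m: "s < m" "decay_const k s * ln (real n) < real m ^ (k - 2)"
      and m_bound: "real m \<le> C * ln (real n) powr (1 / real (k - 2))"
      using C[OF \<open>2 \<le> n\<close>] by blast
    have "real n ^ m * exp (- (real m ^ Suc (k - 2) / decay_const k s)) < 1"
      using pow_mult_exp_less_one[OF decay_const_pos[OF assms(2)] _ _ m(2)] m(1) \<open>2 \<le> n\<close> by simp
    then have "f_ramsey k s (s + 1) n < m"
      using f_ramsey_less_of_union_bound[of k s m n] assms m(1) by (simp add: Suc_diff_Suc numeral_2_eq_2)
    then show ?thesis using m_bound assms(1) by (simp add: of_nat_diff)
  qed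
  then show ?thesis using \<open>0 < C\<close> by blast
qed

end
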